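(* Let $X$ be a ballean whose hypersymmetric square $[X]^{\le2}$ is normal. Then (1) $X$ has bounded growth, and (2) either $X$ is ultranormal or the bornology $\mathcal B_X$ of $X$ has a linearly ordered base.
   Context: A ballean is a pair $(X,\mathcal E_X)$ where $X$ is a set and $\mathcal E_X$ is a family of subsets of $X\times X$ (entourages) such that: each $E\in\mathcal E_X$ contains the diagonal $\Delta_X$; for any $E,F\in\mathcal E_X$ there is $D\in\mathcal E_X$ with $E\circ F^{-1}\subset D$; and $\bigcup\mathcal E_X=X\times X$. For $E\subset X\times X$, $x\in X$, $A\subset X$: $E[x]=\{y:(x,y)\in E\}$, $E[A]=\bigcup_{a\in A}E[a]$. $B\subset X$ is bounded if $B\subset E[x]$ for some $E\in\mathcal E_X$, $x\in X$; $\mathcal B_X$ is the family of bounded sets. Sets $A,B$ are asymptotically disjoint if $E[A]\cap E[B]\in\mathcal B_X$ for all $E\in\mathcal E_X$; $U$ is an asymptotic neighborhood of $A$ if $E[A]\setminus U\in\mathcal B_X$ for all $E$; $X$ is normal if any two asymptotically disjoint sets have disjoint asymptotic neighborhoods, and ultranormal if it contains no two unbounded asymptotically disjoint sets. The hyperballean $[X]^{\mathcal B}$ is $\mathcal B_X\setminus\{\emptyset\}$ with entourages $\hat E=\{(A,B):A\subset E[B],\ B\subset E[A]\}$, $E\in\mathcal E_X$; $[X]^{\le 2}$ is its subballean $\{A:|A|\le2\}$ (entourages restricted to it). A linearly ordered base of $\mathcal B_X$ is a subfamily linearly ordered by inclusion such that every bounded set is contained in a member. $X$ has bounded growth if there is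 $G\subset X\times X$ with $G[B]$ bounded for all bounded $B$, and for each $E\in\mathcal E_X$ a bounded $B$ with $E[x]\subset G[x]$ for all $x\in X\setminus B$. *)

theory Defs
  imports Main
begin

definition ballean :: "'a set \<Rightarrow> ('a \<times> 'a) set set \<Rightarrow> bool" where
  "ballean X EE \<longleftrightarrow>
     (\<forall>E\<in>EE. E \<subseteq> X \<times> X \<and> Id_on X \<subseteq> E) \<and>
     (\<forall>E\<in>EE. \<forall>F\<in>EE. \<exists>D\<in>EE. E O F\<inverse> \<subseteq> D) \<and>
     \<Union>EE = X \<times> X"

definition bounded_set :: "'a set \<Rightarrow> ('a \<times> 'a) set set \<Rightarrow> 'a set \<Rightarrow> bool" where
  "bounded_set X EE B \<longleftrightarrow> (\<exists>E\<in>EE. \<exists>x\<in>X. B \<subseteq> E `` {x})"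

definition asymp_disjoint :: "'a set \<Rightarrow> ('a \<times> 'a) set set \<Rightarrow> 'a set \<Rightarrow> 'a set \<Rightarrow> bool" where
  "asymp_disjoint X EE A B \<longleftrightarrow> (\<forall>E\<in>EE. bounded_set X EE (E `` A \<inter> E `` B))"

definition asymp_nbhd :: "'a set \<Rightarrow> ('a \<times> 'a) set set \<Rightarrow> 'a set \<Rightarrow> 'a set \<Rightarrow> bool" where
  "asymp_nbhd X EE U A \<longleftrightarrow> (\<forall>E\<in>EE. bounded_set X EE (E `` A - U))"

definition normal_ballean :: "'a set \<Rightarrow> ('a \<times> 'a) set set \<Rightarrow> bool" where
  "normal_ballean X EE \<longleftrightarrow>
     (\<forall>A B. A \<subseteq> X \<longrightarrow> B \<subseteq> X \<longrightarrow> asymp_disjoint X EE A B \<longrightarrow>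
        (\<exists>U V. U \<subseteq> X \<and> V \<subseteq> X \<and> asymp_nbhd X EE U A \<and> asymp_nbhd X EE V B \<and> U \<inter> V = {}))"

definition ultranormal :: "'a set \<Rightarrow> ('a \<times> 'a) set set \<Rightarrow> bool" where
  "ultranormal X EE \<longleftrightarrow>
     \<not> (\<exists>A B. A \<subseteq> X \<and> B \<subseteq> X \<and> \<not> bounded_set X EE A \<and> \<not> bounded_set X EE B
            \<and> asymp_disjoint X EE A B)"

text \<open>The hypersymmetric square [X]^{<=2}: nonempty bounded subsets with at most two elements,
  with the restrictions of the hyperballean entourages \<open>\<hat>E\<close>.\<close>

definition hyp2_carrier :: "'a set \<Rightarrow> ('a \<times> 'a) set set \<Rightarrow> 'a set set" where
  "hyp2_carrier X EE = {A. A \<noteq> {} \<and> bounded_set X EE A \<and> finite A \<and> card A \<le> 2}"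

definition hyp_entourage :: "'a set \<Rightarrow> ('a \<times> 'a) set set \<Rightarrow> ('a \<times> 'a) set \<Rightarrow> ('a set \<times> 'a set) set" where
  "hyp_entourage X EE E =
     {(A, B). A \<in> hyp2_carrier X EE \<and> B \<in> hyp2_carrier X EE \<and> A \<subseteq> E `` B \<and> B \<subseteq> E `` A}"

definition hyp2_entourages :: "'a set \<Rightarrow> ('a \<times> 'a) set set \<Rightarrow> ('a set \<times> 'a set) set set" where
  "hyp2_entourages X EE = hyp_entourage X EE ` EE"

definition bounded_growth :: "'a set \<Rightarrow> ('a \<times> 'a) set set \<Rightarrow> bool" where
  "bounded_growth X EE \<longleftrightarrow>
     (\<exists>G. G \<subseteq> X \<times> X \<and> (\<forall>B. bounded_set X EE B \<longrightarrow> bounded_set X EE (G `` B)) \<and>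
        (\<forall>E\<in>EE. \<exists>B. bounded_set X EE B \<and> (\<forall>x\<in>X - B. E `` {x} \<subseteq> G `` {x})))"

definition has_linear_bornology_base :: "'a set \<Rightarrow> ('a \<times> 'a) set set \<Rightarrow> bool" where
  "has_linear_bornology_base X EE \<longleftrightarrow>
     (\<exists>L. (\<forall>A\<in>L. bounded_set X EE A) \<and> (\<forall>A\<in>L. \<forall>B\<in>L. A \<subseteq> B \<or> B \<subseteq> A) \<and>
          (\<forall>B. bounded_set X EE B \<longrightarrow> (\<exists>A\<in>L. B \<subseteq> A)))"

end

theory Submission
  imports Defs
begin

text \<open>Singletons \<open>{x}\<close> and pairs \<open>{x, x0}\<close> are asymptotically disjoint in
  \<open>[X]\<^sup>\<le>\<^sup>2\<close>; a neighbourhood \<open>UU\<close> of the singletons that avoids a neighbourhood of the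
  pairs gives the growth bound \<open>G = {(x, y). {x, y} \<in> UU}\<close>.

  If \<open>X\<close> is not ultranormal, pick unbounded asymptotically disjoint \<open>A\<close>, \<open>B\<close>. Trimming \<open>G\<close>
  produces an unbounded \<open>W \<supseteq> A\<close>, asymptotically disjoint from \<open>B\<close>, such that every point
  off \<open>W\<close> is \<open>G\<close>-close to \<open>B\<close>. Separating the pairs \<open>{w, b0}\<close> (\<open>w \<in> W\<close>) from the pairs
  \<open>{b, w0}\<close> (\<open>b \<in> B\<close>) yields bounded sets \<open>\<alpha> C\<close>, \<open>\<beta> D\<close> with \<open>D \<subseteq> \<alpha> C\<close> or \<open>C \<subseteq> \<beta> D\<close>
  for all bounded \<open>C \<subseteq> B\<close>, \<open>D \<subseteq> W\<close>. This dichotomy forces every family of fewer bounded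
  sets than the cofinality of the bornology to have bounded union, so the unions of the initial
  segments of a well-ordered base of least cardinality form a linear base.\<close>

unbundle cardinal_syntax

definition cofinal_family :: "('a set \<Rightarrow> bool) \<Rightarrow> 'a set set \<Rightarrow> bool" where
  "cofinal_family bd C \<longleftrightarrow> (\<forall>A\<in>C. bd A) \<and> (\<forall>S. bd S \<longrightarrow> (\<exists>A\<in>C. S \<subseteq> A))"

lemma exists_min_card_cofinal_family:
  assumes "cofinal_family bd C0"
  shows "\<exists>C. cofinal_family bd C \<and> (\<forall>D. cofinal_family bd D \<longrightarrow> card_of C \<le>o card_of D)"
proof -
  let ?R = "card_of ` {C. cofinal_family bd C}"
  have "?R \<noteq> {}" using assms by blast
  moreover have "\<forall>r\<in>?R. Well_order r" by (simp add: card_of_Well_order)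
  ultimately obtain r where "r \<in> ?R" "\<forall>r'\<in>?R. r \<le>o r'"
    by (metis exists_minim_Well_order)
  then show ?thesis by auto
qed

lemma small_subfamily_image_not_cofinal:
  assumes min: "\<forall>D. cofinal_family bd D \<longrightarrow> card_of C \<le>o card_of D" and small: "card_of FF <o card_of C"
  shows "\<not> cofinal_family bd (f ` FF)"
proof
  assume "cofinal_family bd (f ` FF)"
  then have "card_of C \<le>o card_of (f ` FF)" using min by blast
  then have "card_of C \<le>o card_of FF" using card_of_image by (rule ordLeq_transitive)
  then show False using small not_ordLess_ordLeq by blast
qed

lemma linear_base_if_small_unions_bounded:
  assumes bd_Un: "\<And>S T. bd S \<Longrightarrow> bd T \<Longrightarrow> bd (S \<union> T)"
    and small: "\<And>FF. \<forall>F\<in>FF. bd F \<Longrightarrow> (\<And>f. \<not> cofinal_family bd (f ` FF)) \<Longrightarrow> bd (\<Union>FF)"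
  shows "\<exists>L. (\<forall>A\<in>L. bd A) \<and> (\<forall>A\<in>L. \<forall>B\<in>L. A \<subseteq> B \<or> B \<subseteq> A) \<and>
           (\<forall>S. bd S \<longrightarrow> (\<exists>A\<in>L. S \<subseteq> A))"
proof -
  have "cofinal_family bd (Collect bd)" unfolding cofinal_family_def by blast
  then obtain C where C: "cofinal_family bd C"
    and min: "\<forall>D. cofinal_family bd D \<longrightarrow> card_of C \<le>o card_of D"
    using exists_min_card_cofinal_family by blast
  define r where "r = card_of C"
  have co: "Card_order r" and fr: "Field r = C"
    unfolding r_def by (rule card_of_Card_order, rule Field_card_of)
  then have "Linear_order r" unfolding card_order_on_def well_order_on_def by simp
  then have refl: "Refl r" and tr: "trans r" and tot: "Total r"
    unfolding linear_order_on_def partial_order_on_def preorder_on_def by auto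
  have under: "under r c = underS r c \<union> {c}" if "c \<in> C" for c
  proof -
    have "(c, c) \<in> r" using refl that fr by (simp add: refl_on_def)
    then show ?thesis unfolding under_def underS_def by auto
  qed
  define L where "L = (\<lambda>c. \<Union>(under r c)) ` C"
  have bounded_L: "bd (\<Union>(under r c))" if c: "c \<in> C" for c
  proof -
    have "underS r c \<subseteq> C" using fr unfolding underS_def Field_def by auto
    then have "\<forall>F\<in>underS r c. bd F" using C unfolding cofinal_family_def by blast
    moreover have "card_of (underS r c) <o card_of C" using card_of_underS[OF co] c fr r_def by simp
    ultimately have "bd (\<Union>(underS r c))"
      by (rule small[OF _ small_subfamily_image_not_cofinal[OF min]])
    moreover have "bd c" using C c unfolding cofinal_family_def by blast
    ultimately show ?thesis using under[OF c] bd_Un by auto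
  qed
  have mono: "under r c \<subseteq> under r d" if "(c, d) \<in> r" for c d
    using tr that unfolding under_def trans_def by blast
  show ?thesis
  proof (intro exI[of _ L] conjI ballI allI impI)
    show "bd A" if "A \<in> L" for A using that bounded_L unfolding L_def by auto
  next
    fix A B assume "A \<in> L" "B \<in> L"
    then obtain c d where cd: "c \<in> C" "d \<in> C" "A = \<Union>(under r c)" "B = \<Union>(under r d)"
      unfolding L_def by auto
    then have "c = d \<or> (c, d) \<in> r \<or> (d, c) \<in> r" using tot fr unfolding total_on_def by metis
    then show "A \<subseteq> B \<or> B \<subseteq> A" using mono cd by blast
  next
    fix S assume "bd S"
    then obtain c where "c \<in> C" "S \<subseteq> c" using C unfolding cofinal_family_def by blast
    moreover have "c \<in> under r c" using under[OF \<open>c \<in> C\<close>] by simp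
    ultimately show "\<exists>A\<in>L. S \<subseteq> A" unfolding L_def by blast
  qed
qed

locale dichotomous_bornology =
  fixes bd :: "'a set \<Rightarrow> bool" and G :: "'a rel" and W B :: "'a set"
    and \<alpha> \<beta> :: "'a set \<Rightarrow> 'a set"
  assumes bd_subset: "T \<subseteq> S \<Longrightarrow> bd S \<Longrightarrow> bd T"
    and bd_Un: "bd S \<Longrightarrow> bd T \<Longrightarrow> bd (S \<union> T)"
    and bd_singleton: "x \<in> W \<union> B \<Longrightarrow> bd {x}"
    and bd_Image: "bd S \<Longrightarrow> bd (G `` S)"
    and unbounded_W: "\<not> bd W" and unbounded_B: "\<not> bd B"
    and cover: "bd S \<Longrightarrow> S \<subseteq> (S \<inter> W) \<union> G `` (G `` S \<inter> B)"
    and bd_\<alpha>: "bd C \<Longrightarrow> bd (\<alpha> C)"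
    and bd_\<beta>: "bd C \<Longrightarrow> bd (\<beta> C)"
    and dichotomy: "bd C \<Longrightarrow> C \<subseteq> B \<Longrightarrow> bd D \<Longrightarrow> D \<subseteq> W \<Longrightarrow> D \<subseteq> \<alpha> C \<or> C \<subseteq> \<beta> D"
begin

lemma bd_Int: "bd S \<Longrightarrow> bd (S \<inter> T)"
  using bd_subset by blast

lemma exists_outside_bounded:
  assumes "bd T"
  shows "\<exists>w\<in>W. w \<notin> T" and "\<exists>b\<in>B. b \<notin> T"
  using assms bd_subset unbounded_W unbounded_B by blast+

lemma exists_B_part_escaping:
  assumes FF: "\<forall>F\<in>FF. bd F" and small: "\<And>f. \<not> cofinal_family bd (f ` FF)"
  shows "\<exists>C. bd C \<and> C \<subseteq> B \<and> (\<forall>F\<in>FF. \<not> C \<subseteq> \<beta> (F \<inter> W))"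
proof (rule ccontr)
  assume contra: "\<not> ?thesis"
  define g where "g F = \<alpha> (\<beta> (F \<inter> W) \<inter> B) \<union> G `` (\<beta> (F \<inter> W) \<inter> B)" for F
  have "cofinal_family bd (g ` FF)"
    unfolding cofinal_family_def
  proof (intro conjI ballI allI impI)
    show "bd A" if "A \<in> g ` FF" for A
      using that FF by (auto simp: g_def intro!: bd_Un bd_\<alpha> bd_Image bd_Int bd_\<beta>)
  next
    fix S assume S: "bd S"
    obtain b where b: "b \<in> B" "b \<notin> \<beta> (S \<inter> W)"
      using exists_outside_bounded(2)[OF bd_\<beta>[OF bd_Int[OF S]]] by blast
    have "bd ((G `` S \<inter> B) \<union> {b})" using S b(1) by (intro bd_Un bd_Int bd_Image bd_singleton) auto
    moreover have "(G `` S \<inter> B) \<union> {b} \<subseteq> B" using b(1) by blast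
    ultimately obtain F where F: "F \<in> FF" "(G `` S \<inter> B) \<union> {b} \<subseteq> \<beta> (F \<inter> W)"
      using contra by blast
    let ?C = "\<beta> (F \<inter> W) \<inter> B"
    have "S \<inter> W \<subseteq> \<alpha> ?C \<or> ?C \<subseteq> \<beta> (S \<inter> W)"
      using F(1) FF S by (intro dichotomy bd_Int bd_\<beta>) auto
    then have "S \<inter> W \<subseteq> \<alpha> ?C" using F(2) b by blast
    then have "S \<subseteq> g F" using cover[OF S] F(2) unfolding g_def by blast
    then show "\<exists>A\<in>g ` FF. S \<subseteq> A" using F(1) by blast
  qed
  then show False using small by blast
qed

lemma exists_W_part_escaping:
  assumes FF: "\<forall>F\<in>FF. bd F" and small: "\<And>f. \<not> cofinal_family bd (f ` FF)"
  shows "\<exists>C. bd C \<and> C \<subseteq> W \<and> (\<forall>F\<in>FF. \<not> C \<subseteq> \<alpha> (G `` F \<inter> B))"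
proof (rule ccontr)
  assume contra: "\<not> ?thesis"
  define g where "g F = (\<alpha> (G `` F \<inter> B) \<inter> W) \<union> G `` \<beta> (\<alpha> (G `` F \<inter> B) \<inter> W)" for F
  have "cofinal_family bd (g ` FF)"
    unfolding cofinal_family_def
  proof (intro conjI ballI allI impI)
    show "bd A" if "A \<in> g ` FF" for A
      using that FF by (auto simp: g_def intro!: bd_Un bd_\<alpha> bd_Image bd_Int bd_\<beta>)
  next
    fix S assume S: "bd S"
    obtain w where w: "w \<in> W" "w \<notin> \<alpha> (G `` S \<inter> B)"
      using exists_outside_bounded(1)[OF bd_\<alpha>[OF bd_Int[OF bd_Image[OF S]]]] by blast
    have "bd ((S \<inter> W) \<union> {w})" using S w(1) by (intro bd_Un bd_Int bd_singleton) auto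
    moreover have "(S \<inter> W) \<union> {w} \<subseteq> W" using w(1) by blast
    ultimately obtain F where F: "F \<in> FF" "(S \<inter> W) \<union> {w} \<subseteq> \<alpha> (G `` F \<inter> B)"
      using contra by blast
    let ?C = "\<alpha> (G `` F \<inter> B) \<inter> W"
    have "?C \<subseteq> \<alpha> (G `` S \<inter> B) \<or> G `` S \<inter> B \<subseteq> \<beta> ?C"
      using F(1) FF S by (intro dichotomy bd_Int bd_\<alpha> bd_Image) auto
    then have "G `` S \<inter> B \<subseteq> \<beta> ?C" using F(2) w by blast
    then have "S \<subseteq> g F" using cover[OF S] F(2) unfolding g_def by blast
    then show "\<exists>A\<in>g ` FF. S \<subseteq> A" using F(1) by blast
  qed
  then show False using small by blast
qed

lemma small_union_bounded:
  assumes FF: "\<forall>F\<in>FF. bd F" and small: "\<And>f. \<not> cofinal_family bd (f ` FF)"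
  shows "bd (\<Union>FF)"
proof -
  obtain C1 where C1: "bd C1" "C1 \<subseteq> B" "\<forall>F\<in>FF. \<not> C1 \<subseteq> \<beta> (F \<inter> W)"
    using exists_B_part_escaping[OF FF small] by blast
  obtain C2 where C2: "bd C2" "C2 \<subseteq> W" "\<forall>F\<in>FF. \<not> C2 \<subseteq> \<alpha> (G `` F \<inter> B)"
    using exists_W_part_escaping[OF FF small] by blast
  have "F \<subseteq> \<alpha> C1 \<union> G `` \<beta> C2" if F: "F \<in> FF" for F
  proof -
    have "F \<inter> W \<subseteq> \<alpha> C1"
      using dichotomy[OF C1(1,2) bd_Int[of F W]] C1(3) F FF by blast
    moreover have "G `` F \<inter> B \<subseteq> \<beta> C2"
      using dichotomy[OF bd_Int[OF bd_Image] _ C2(1,2), of F B] C2(3) F FF by blast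
    ultimately show ?thesis using cover[of F] F FF by blast
  qed
  then have "\<Union>FF \<subseteq> \<alpha> C1 \<union> G `` \<beta> C2" by blast
  moreover have "bd (\<alpha> C1 \<union> G `` \<beta> C2)" using C1(1) C2(1) by (intro bd_Un bd_\<alpha> bd_Image bd_\<beta>)
  ultimately show ?thesis by (rule bd_subset)
qed

end

lemma bounded_set_subset: "S \<subseteq> T \<Longrightarrow> bounded_set X EE T \<Longrightarrow> bounded_set X EE S"
  unfolding bounded_set_def by blast

lemma hyp_entourage_iff:
  "(K, L) \<in> hyp_entourage X EE E \<longleftrightarrow>
     K \<in> hyp2_carrier X EE \<and> L \<in> hyp2_carrier X EE \<and> K \<subseteq> E `` L \<and> L \<subseteq> E `` K"
  unfolding hyp_entourage_def by auto

definition growth_bound :: "'a set \<Rightarrow> ('a \<times> 'a) set set \<Rightarrow> 'a rel \<Rightarrow> bool" where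
  "growth_bound X EE G \<longleftrightarrow> G \<subseteq> X \<times> X \<and>
     (\<forall>B. bounded_set X EE B \<longrightarrow> bounded_set X EE (G `` B)) \<and>
     (\<forall>E\<in>EE. \<exists>B. bounded_set X EE B \<and> (\<forall>x\<in>X - B. E `` {x} \<subseteq> G `` {x}))"

lemma bounded_growth_iff: "bounded_growth X EE \<longleftrightarrow> (\<exists>G. growth_bound X EE G)"
  unfolding bounded_growth_def growth_bound_def ..

locale nonempty_ballean =
  fixes X :: "'a set" and EE :: "('a \<times> 'a) set set"
  assumes ballean: "ballean X EE" and nonempty: "X \<noteq> {}"
begin

lemma entourage_subset: "E \<in> EE \<Longrightarrow> E \<subseteq> X \<times> X"
  using conjunct1[OF ballean[unfolded ballean_def]] by blast

lemma entourage_refl: "E \<in> EE \<Longrightarrow> x \<in> X \<Longrightarrow> (x, x) \<in> E"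
  using conjunct1[OF ballean[unfolded ballean_def]] Id_onI by blast

lemma entourage_relcomp_converse: "E \<in> EE \<Longrightarrow> F \<in> EE \<Longrightarrow> \<exists>D\<in>EE. E O F\<inverse> \<subseteq> D"
  using conjunct1[OF conjunct2[OF ballean[unfolded ballean_def]]] by blast

lemma entourage_exists:
  assumes "x \<in> X" "y \<in> X"
  shows "\<exists>E\<in>EE. (x, y) \<in> E"
proof -
  have "(x, y) \<in> \<Union>EE" using conjunct2[OF conjunct2[OF ballean[unfolded ballean_def]]] assms by simp
  then show ?thesis by blast
qed

lemma entourage_converse:
  assumes E: "E \<in> EE"
  shows "\<exists>D\<in>EE. E\<inverse> \<subseteq> D"
proof -
  have "E\<inverse> \<subseteq> E O E\<inverse>" using entourage_subset[OF E] entourage_refl[OF E] by blast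
  then show ?thesis using entourage_relcomp_converse[OF E E] by blast
qed

lemma entourage_relcomp:
  assumes E: "E \<in> EE" and F: "F \<in> EE"
  shows "\<exists>D\<in>EE. E O F \<subseteq> D"
proof -
  obtain F' where F': "F' \<in> EE" "F\<inverse> \<subseteq> F'" using entourage_converse[OF F] by blast
  then have "E O F \<subseteq> E O F'\<inverse>" by blast
  then show ?thesis using entourage_relcomp_converse[OF E F'(1)] by blast
qed

lemma entourage_Un:
  assumes E: "E \<in> EE" and F: "F \<in> EE"
  shows "\<exists>D\<in>EE. E \<union> F \<subseteq> D"
proof -
  have "E \<union> F \<subseteq> E O F"
    using entourage_subset[OF E] entourage_subset[OF F] entourage_refl[OF E] entourage_refl[OF F]
    by blast
  then show ?thesis using entourage_relcomp[OF E F] by blast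
qed

lemma entourage_symmetric_cover:
  assumes E: "E \<in> EE"
  shows "\<exists>D\<in>EE. E \<union> E\<inverse> \<subseteq> D"
proof -
  obtain F where F: "F \<in> EE" "E\<inverse> \<subseteq> F" using entourage_converse[OF E] by blast
  obtain D where "D \<in> EE" "E \<union> F \<subseteq> D" using entourage_Un[OF E F(1)] by blast
  then show ?thesis using F(2) by blast
qed

lemma bounded_subset_carrier: "bounded_set X EE S \<Longrightarrow> S \<subseteq> X"
  unfolding bounded_set_def using entourage_subset by blast

lemma bounded_around:
  assumes S: "bounded_set X EE S" and x0: "x0 \<in> X"
  shows "\<exists>E\<in>EE. S \<subseteq> E `` {x0}"
proof -
  obtain E x where E: "E \<in> EE" "x \<in> X" "S \<subseteq> E `` {x}" using S unfolding bounded_set_def by blast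
  obtain F where F: "F \<in> EE" "(x0, x) \<in> F" using entourage_exists[OF x0 E(2)] by blast
  obtain D where "D \<in> EE" "F O E \<subseteq> D" using entourage_relcomp[OF F(1) E(1)] by blast
  then show ?thesis using E(3) F(2) by blast
qed

lemma bounded_around_symmetric:
  assumes S: "bounded_set X EE S" and x0: "x0 \<in> X"
  shows "\<exists>E\<in>EE. S \<times> {x0} \<subseteq> E \<and> {x0} \<times> S \<subseteq> E"
proof -
  obtain F where F: "F \<in> EE" "S \<subseteq> F `` {x0}" using bounded_around[OF S x0] by blast
  obtain D where "D \<in> EE" "F \<union> F\<inverse> \<subseteq> D" using entourage_symmetric_cover[OF F(1)] by blast
  then show ?thesis using F(2) by blast
qed

lemma bounded_Un:
  assumes S: "bounded_set X EE S" and T: "bounded_set X EE T"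
  shows "bounded_set X EE (S \<union> T)"
proof -
  obtain x0 where x0: "x0 \<in> X" using nonempty by blast
  obtain E F where "E \<in> EE" "S \<subseteq> E `` {x0}" "F \<in> EE" "T \<subseteq> F `` {x0}"
    using bounded_around[OF S x0] bounded_around[OF T x0] by blast
  moreover obtain D where "D \<in> EE" "E \<union> F \<subseteq> D" using entourage_Un calculation by blast
  ultimately show ?thesis using x0 unfolding bounded_set_def by blast
qed

lemma bounded_Image:
  assumes S: "bounded_set X EE S" and E: "E \<in> EE"
  shows "bounded_set X EE (E `` S)"
proof -
  obtain F x where F: "F \<in> EE" "x \<in> X" "S \<subseteq> F `` {x}" using S unfolding bounded_set_def by blast
  obtain D where "D \<in> EE" "F O E \<subseteq> D" using entourage_relcomp[OF F(1) E] by blast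
  then show ?thesis using F(2,3) unfolding bounded_set_def by blast
qed

lemma bounded_converse_Image:
  assumes S: "bounded_set X EE S" and E: "E \<in> EE"
  shows "bounded_set X EE (E\<inverse> `` S)"
proof -
  obtain D where "D \<in> EE" "E\<inverse> \<subseteq> D" using entourage_converse[OF E] by blast
  then show ?thesis using bounded_Image[OF S] bounded_set_subset[of "E\<inverse> `` S"] by blast
qed

lemma bounded_singleton:
  assumes x: "x \<in> X"
  shows "bounded_set X EE {x}"
proof -
  obtain E where "E \<in> EE" "(x, x) \<in> E" using entourage_exists[OF x x] by blast
  then show ?thesis using x unfolding bounded_set_def by blast
qed

lemma bounded_empty: "bounded_set X EE {}"
proof -
  obtain x where "x \<in> X" using nonempty by blast
  then show ?thesis using bounded_set_subset[OF empty_subsetI bounded_singleton] by blast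
qed

lemma singleton_in_hyp2_carrier: "x \<in> X \<Longrightarrow> {x} \<in> hyp2_carrier X EE"
  unfolding hyp2_carrier_def using bounded_singleton by auto

lemma doubleton_in_hyp2_carrier:
  assumes "x \<in> X" "y \<in> X"
  shows "{x, y} \<in> hyp2_carrier X EE"
proof -
  have "{x, y} = {x} \<union> {y}" by blast
  then have "bounded_set X EE {x, y}" using assms by (metis bounded_Un bounded_singleton)
  then show ?thesis unfolding hyp2_carrier_def by (auto simp: card_insert_if)
qed

lemma hyp2_bounded_iff:
  assumes "KK \<subseteq> hyp2_carrier X EE"
  shows "bounded_set (hyp2_carrier X EE) (hyp2_entourages X EE) KK \<longleftrightarrow> bounded_set X EE (\<Union>KK)"
proof
  assume "bounded_set (hyp2_carrier X EE) (hyp2_entourages X EE) KK"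
  then obtain E K0 where E: "E \<in> EE" "K0 \<in> hyp2_carrier X EE"
    and KK: "KK \<subseteq> hyp_entourage X EE E `` {K0}"
    unfolding bounded_set_def hyp2_entourages_def by blast
  have "\<Union>KK \<subseteq> E `` K0" using KK unfolding hyp_entourage_def by blast
  moreover have "bounded_set X EE K0" using E(2) unfolding hyp2_carrier_def by blast
  then have "bounded_set X EE (E `` K0)" using E(1) by (rule bounded_Image)
  ultimately show "bounded_set X EE (\<Union>KK)" by (rule bounded_set_subset)
next
  assume bounded: "bounded_set X EE (\<Union>KK)"
  obtain x0 where x0: "x0 \<in> X" using nonempty by blast
  obtain D where D: "D \<in> EE" "\<Union>KK \<times> {x0} \<subseteq> D" "{x0} \<times> \<Union>KK \<subseteq> D"
    using bounded_around_symmetric[OF bounded x0] by blast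
  have "K \<in> hyp_entourage X EE D `` {{x0}}" if K: "K \<in> KK" for K
  proof -
    have K_carrier: "K \<in> hyp2_carrier X EE" using K assms by blast
    then obtain k where "k \<in> K" unfolding hyp2_carrier_def by blast
    then have "{x0} \<subseteq> D `` K" using K D(2) by blast
    moreover have "K \<subseteq> D `` {x0}" using K D(3) by blast
    ultimately show ?thesis
      using K_carrier singleton_in_hyp2_carrier[OF x0] by (simp add: hyp_entourage_iff)
  qed
  then have "KK \<subseteq> hyp_entourage X EE D `` {{x0}}" by blast
  then show "bounded_set (hyp2_carrier X EE) (hyp2_entourages X EE) KK"
    using D(1) singleton_in_hyp2_carrier[OF x0]
    unfolding bounded_set_def hyp2_entourages_def by blast
qed

lemma hyp2_asymp_disjointI:
  assumes "\<And>E. E \<in> EE \<Longrightarrow>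
    bounded_set X EE (\<Union>(hyp_entourage X EE E `` AA \<inter> hyp_entourage X EE E `` BB))"
  shows "asymp_disjoint (hyp2_carrier X EE) (hyp2_entourages X EE) AA BB"
proof -
  have "hyp_entourage X EE E `` AA \<inter> hyp_entourage X EE E `` BB \<subseteq> hyp2_carrier X EE" for E
    unfolding hyp_entourage_def by blast
  then show ?thesis
    using assms hyp2_bounded_iff unfolding asymp_disjoint_def hyp2_entourages_def by auto
qed

lemma hyp2_asymp_nbhdD:
  assumes "asymp_nbhd (hyp2_carrier X EE) (hyp2_entourages X EE) UU AA" and E: "E \<in> EE"
  shows "bounded_set X EE (\<Union>(hyp_entourage X EE E `` AA - UU))"
proof -
  have "hyp_entourage X EE E \<in> hyp2_entourages X EE" unfolding hyp2_entourages_def using E by blast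
  then have "bounded_set (hyp2_carrier X EE) (hyp2_entourages X EE) (hyp_entourage X EE E `` AA - UU)"
    using assms(1) unfolding asymp_nbhd_def by blast
  then show ?thesis using hyp2_bounded_iff[of "hyp_entourage X EE E `` AA - UU"]
    unfolding hyp_entourage_def by blast
qed

lemma hyp2_asymp_disjoint_singletons_pairs:
  assumes x0: "x0 \<in> X"
  shows "asymp_disjoint (hyp2_carrier X EE) (hyp2_entourages X EE)
           ((\<lambda>x. {x}) ` X) ((\<lambda>x. {x, x0}) ` X)"
proof (rule hyp2_asymp_disjointI)
  fix E assume E: "E \<in> EE"
  let ?H = "hyp_entourage X EE E"
  have "\<Union>(?H `` ((\<lambda>x. {x}) ` X) \<inter> ?H `` ((\<lambda>x. {x, x0}) ` X)) \<subseteq> E `` (E\<inverse> `` (E\<inverse> `` {x0}))"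
  proof
    fix k assume "k \<in> \<Union>(?H `` ((\<lambda>x. {x}) ` X) \<inter> ?H `` ((\<lambda>x. {x, x0}) ` X))"
    then obtain z y K where "k \<in> K" and "({z}, K) \<in> ?H" and "({y, x0}, K) \<in> ?H" by blast
    then obtain k' where "k' \<in> K" "(k', x0) \<in> E" and "K \<subseteq> E `` {z}"
      unfolding hyp_entourage_iff by blast
    then show "k \<in> E `` (E\<inverse> `` (E\<inverse> `` {x0}))" using \<open>k \<in> K\<close> by blast
  qed
  moreover have "bounded_set X EE (E `` (E\<inverse> `` (E\<inverse> `` {x0})))"
    using E x0 by (intro bounded_Image bounded_converse_Image bounded_singleton)
  ultimately show "bounded_set X EE (\<Union>(?H `` ((\<lambda>x. {x}) ` X) \<inter> ?H `` ((\<lambda>x. {x, x0}) ` X)))"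
    by (rule bounded_set_subset)
qed

lemma hyp2_asymp_disjoint_pair_families:
  assumes WB: "asymp_disjoint X EE W B" and w0: "w0 \<in> X" and b0: "b0 \<in> X"
  shows "asymp_disjoint (hyp2_carrier X EE) (hyp2_entourages X EE)
           ((\<lambda>w. {w, b0}) ` W) ((\<lambda>b. {b, w0}) ` B)"
proof (rule hyp2_asymp_disjointI)
  fix E assume E: "E \<in> EE"
  let ?H = "hyp_entourage X EE E"
  obtain D where D: "D \<in> EE" "E \<union> E\<inverse> \<subseteq> D" using entourage_symmetric_cover[OF E] by blast
  define Z where "Z = D `` W \<inter> D `` B"
  have "\<Union>(?H `` ((\<lambda>w. {w, b0}) ` W) \<inter> ?H `` ((\<lambda>b. {b, w0}) ` B)) \<subseteq> E `` (E `` (E `` {w0} \<union> Z) \<union> {b0})"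
  proof
    fix k assume "k \<in> \<Union>(?H `` ((\<lambda>w. {w, b0}) ` W) \<inter> ?H `` ((\<lambda>b. {b, w0}) ` B))"
    then obtain w b K where w: "w \<in> W" and b: "b \<in> B" and k: "k \<in> K"
      and K_w: "({w, b0}, K) \<in> ?H" and K_b: "({b, w0}, K) \<in> ?H" by blast
    obtain k1 where k1: "k1 \<in> K" "(k1, w) \<in> E" using K_w unfolding hyp_entourage_iff by blast
    have "(b, k1) \<in> E \<or> (w0, k1) \<in> E" using K_b k1(1) unfolding hyp_entourage_iff by blast
    then have "k1 \<in> E `` {w0} \<union> Z" using D(2) w b k1(2) unfolding Z_def by blast
    then have "w \<in> E `` (E `` {w0} \<union> Z)" using k1(2) by blast
    then show "k \<in> E `` (E `` (E `` {w0} \<union> Z) \<union> {b0})" using K_w k unfolding hyp_entourage_iff by blast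
  qed
  moreover have "bounded_set X EE Z" using WB D(1) unfolding asymp_disjoint_def Z_def by blast
  then have "bounded_set X EE (E `` (E `` (E `` {w0} \<union> Z) \<union> {b0}))"
    using E w0 b0 by (intro bounded_Image bounded_Un bounded_singleton)
  ultimately show "bounded_set X EE (\<Union>(?H `` ((\<lambda>w. {w, b0}) ` W) \<inter> ?H `` ((\<lambda>b. {b, w0}) ` B)))"
    by (rule bounded_set_subset)
qed

lemma hyp2_nbhd_of_singletons:
  assumes UU: "asymp_nbhd (hyp2_carrier X EE) (hyp2_entourages X EE) UU ((\<lambda>x. {x}) ` X)"
    and E: "E \<in> EE"
  shows "\<exists>K. bounded_set X EE K \<and> (\<forall>x\<in>X - K. \<forall>y\<in>E `` {x}. {x, y} \<in> UU)"
proof -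
  let ?K = "\<Union>(hyp_entourage X EE E `` ((\<lambda>x. {x}) ` X) - UU)"
  have "{x, y} \<in> UU" if x: "x \<in> X - ?K" and y: "y \<in> E `` {x}" for x y
  proof -
    have "y \<in> X" using y entourage_subset[OF E] by blast
    then have "({x}, {x, y}) \<in> hyp_entourage X EE E"
      using x y entourage_refl[OF E]
      by (auto simp: hyp_entourage_iff singleton_in_hyp2_carrier doubleton_in_hyp2_carrier)
    then show ?thesis using x by blast
  qed
  then show ?thesis using hyp2_asymp_nbhdD[OF UU E] by blast
qed

lemma hyp2_nbhd_of_pairs:
  assumes UU: "asymp_nbhd (hyp2_carrier X EE) (hyp2_entourages X EE) UU ((\<lambda>w. {w, p}) ` W)"
    and W: "W \<subseteq> X" and p: "p \<in> X" and C: "bounded_set X EE C"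
  shows "\<exists>M. bounded_set X EE M \<and> (\<forall>w\<in>W - M. \<forall>c\<in>C. {w, c} \<in> UU)"
proof -
  obtain E where E: "E \<in> EE" "C \<times> {p} \<subseteq> E" "{p} \<times> C \<subseteq> E"
    using bounded_around_symmetric[OF C p] by blast
  let ?M = "\<Union>(hyp_entourage X EE E `` ((\<lambda>w. {w, p}) ` W) - UU)"
  have "{w, c} \<in> UU" if w: "w \<in> W - ?M" and c: "c \<in> C" for w c
  proof -
    have "w \<in> X" "c \<in> X" using w W c bounded_subset_carrier[OF C] by auto
    then have "({w, p}, {w, c}) \<in> hyp_entourage X EE E"
      using c p E(2,3) entourage_refl[OF E(1)] by (auto simp: hyp_entourage_iff doubleton_in_hyp2_carrier)
    then show ?thesis using w by blast
  qed
  then show ?thesis using hyp2_asymp_nbhdD[OF UU E(1)] by blast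
qed

lemma exists_symmetric_growth_bound:
  assumes normal: "normal_ballean (hyp2_carrier X EE) (hyp2_entourages X EE)"
  shows "\<exists>G. sym G \<and> growth_bound X EE G"
proof -
  obtain x0 where x0: "x0 \<in> X" using nonempty by blast
  have "(\<lambda>x. {x}) ` X \<subseteq> hyp2_carrier X EE" "(\<lambda>x. {x, x0}) ` X \<subseteq> hyp2_carrier X EE"
    using singleton_in_hyp2_carrier doubleton_in_hyp2_carrier[OF _ x0] by blast+
  then obtain UU VV where disjoint: "UU \<inter> VV = {}"
    and UU: "asymp_nbhd (hyp2_carrier X EE) (hyp2_entourages X EE) UU ((\<lambda>x. {x}) ` X)"
    and VV: "asymp_nbhd (hyp2_carrier X EE) (hyp2_entourages X EE) VV ((\<lambda>x. {x, x0}) ` X)"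
    using normal hyp2_asymp_disjoint_singletons_pairs[OF x0] unfolding normal_ballean_def by metis
  define G where "G = {(x, y). x \<in> X \<and> y \<in> X \<and> {x, y} \<in> UU}"
  have "sym G" unfolding G_def sym_def by (auto simp: insert_commute)
  moreover have "bounded_set X EE (G `` S)" if S: "bounded_set X EE S" for S
  proof -
    obtain M where M: "bounded_set X EE M" "\<forall>y\<in>X - M. \<forall>c\<in>S. {y, c} \<in> VV"
      using hyp2_nbhd_of_pairs[OF VV order_refl x0 S] by blast
    have "G `` S \<subseteq> M" using M(2) disjoint unfolding G_def by (auto simp: insert_commute)
    then show ?thesis using M(1) by (rule bounded_set_subset)
  qed
  moreover have "\<exists>K. bounded_set X EE K \<and> (\<forall>x\<in>X - K. E `` {x} \<subseteq> G `` {x})" if E: "E \<in> EE" for E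
    using hyp2_nbhd_of_singletons[OF UU E] entourage_subset[OF E] unfolding G_def by blast
  moreover have "G \<subseteq> X \<times> X" unfolding G_def by blast
  ultimately show ?thesis unfolding growth_bound_def by blast
qed

lemma growth_bound_Diff_asymp_disjoint:
  assumes G: "growth_bound X EE G" and AB: "asymp_disjoint X EE A B"
  shows "growth_bound X EE (G - (A \<times> B \<union> B \<times> A))"
  unfolding growth_bound_def
proof (intro conjI allI impI ballI)
  show "G - (A \<times> B \<union> B \<times> A) \<subseteq> X \<times> X" using G unfolding growth_bound_def by blast
next
  fix S assume "bounded_set X EE S"
  then have "bounded_set X EE (G `` S)" using G unfolding growth_bound_def by blast
  then show "bounded_set X EE ((G - (A \<times> B \<union> B \<times> A)) `` S)" by (rule bounded_set_subset[rotated]) blast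
next
  fix E assume E: "E \<in> EE"
  obtain K where K: "bounded_set X EE K" "\<forall>x\<in>X - K. E `` {x} \<subseteq> G `` {x}"
    using G E unfolding growth_bound_def by blast
  obtain D where D: "D \<in> EE" "E \<union> E\<inverse> \<subseteq> D" using entourage_symmetric_cover[OF E] by blast
  let ?Z = "D `` A \<inter> D `` B"
  have "bounded_set X EE ?Z" using AB D(1) unfolding asymp_disjoint_def by blast
  then have "bounded_set X EE (K \<union> ?Z)" using K(1) by (rule bounded_Un[rotated])
  moreover have "E `` {x} \<subseteq> (G - (A \<times> B \<union> B \<times> A)) `` {x}" if x: "x \<in> X - (K \<union> ?Z)" for x
  proof
    fix y assume y: "y \<in> E `` {x}"
    have "(x, x) \<in> D" using entourage_refl[OF D(1)] x by blast
    then have "(x, y) \<notin> A \<times> B \<union> B \<times> A" using x y D(2) by blast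
    then show "y \<in> (G - (A \<times> B \<union> B \<times> A)) `` {x}" using K(2) x y by blast
  qed
  ultimately show "\<exists>K. bounded_set X EE K \<and>
      (\<forall>x\<in>X - K. E `` {x} \<subseteq> (G - (A \<times> B \<union> B \<times> A)) `` {x})" by blast
qed

lemma asymp_disjoint_outside_Image:
  assumes G: "growth_bound X EE G"
  shows "asymp_disjoint X EE (X - G `` B) B"
  unfolding asymp_disjoint_def
proof
  fix E assume E: "E \<in> EE"
  obtain D where D: "D \<in> EE" "E O E\<inverse> \<subseteq> D" using entourage_relcomp_converse[OF E E] by blast
  obtain K where K: "bounded_set X EE K" "\<forall>x\<in>X - K. D `` {x} \<subseteq> G `` {x}"
    using G D(1) unfolding growth_bound_def by blast
  have "E `` (X - G `` B) \<inter> E `` B \<subseteq> E `` K"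
  proof
    fix x assume "x \<in> E `` (X - G `` B) \<inter> E `` B"
    then obtain w b where w: "w \<in> X - G `` B" "(w, x) \<in> E" and b: "b \<in> B" "(b, x) \<in> E" by blast
    have "(b, w) \<in> D" using w(2) b(2) D(2) by blast
    moreover have "b \<in> X" using b(2) entourage_subset[OF E] by blast
    ultimately have "b \<in> K" using K(2) w(1) b(1) by blast
    then show "x \<in> E `` K" using b(2) by blast
  qed
  then show "bounded_set X EE (E `` (X - G `` B) \<inter> E `` B)"
    using bounded_Image[OF K(1) E] by (rule bounded_set_subset)
qed

lemma exists_dichotomy_maps:
  assumes normal: "normal_ballean (hyp2_carrier X EE) (hyp2_entourages X EE)"
    and W: "W \<subseteq> X" "\<not> bounded_set X EE W" and B: "B \<subseteq> X" "\<not> bounded_set X EE B"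
    and WB: "asymp_disjoint X EE W B"
  shows "\<exists>\<alpha> \<beta>. (\<forall>C. bounded_set X EE C \<longrightarrow> bounded_set X EE (\<alpha> C) \<and> bounded_set X EE (\<beta> C)) \<and>
    (\<forall>C D. C \<subseteq> B \<longrightarrow> D \<subseteq> W \<longrightarrow> bounded_set X EE C \<longrightarrow> bounded_set X EE D \<longrightarrow>
       D \<subseteq> \<alpha> C \<or> C \<subseteq> \<beta> D)"
proof -
  have "W \<noteq> {}" "B \<noteq> {}" using W(2) B(2) bounded_empty by auto
  then obtain w0 b0 where w0: "w0 \<in> W" and b0: "b0 \<in> B" by blast
  then have "w0 \<in> X" "b0 \<in> X" using W(1) B(1) by blast+
  moreover have "(\<lambda>w. {w, b0}) ` W \<subseteq> hyp2_carrier X EE" "(\<lambda>b. {b, w0}) ` B \<subseteq> hyp2_carrier X EE"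
    using W(1) B(1) doubleton_in_hyp2_carrier calculation by blast+
  ultimately obtain UU VV where disjoint: "UU \<inter> VV = {}"
    and UU: "asymp_nbhd (hyp2_carrier X EE) (hyp2_entourages X EE) UU ((\<lambda>w. {w, b0}) ` W)"
    and VV: "asymp_nbhd (hyp2_carrier X EE) (hyp2_entourages X EE) VV ((\<lambda>b. {b, w0}) ` B)"
    using normal hyp2_asymp_disjoint_pair_families[OF WB] unfolding normal_ballean_def by metis
  have "\<forall>C. \<exists>M. bounded_set X EE C \<longrightarrow> bounded_set X EE M \<and> (\<forall>w\<in>W - M. \<forall>c\<in>C. {w, c} \<in> UU)"
    using hyp2_nbhd_of_pairs[OF UU W(1) \<open>b0 \<in> X\<close>] by blast
  then obtain \<alpha> where \<alpha>_bounded: "\<And>C. bounded_set X EE C \<Longrightarrow> bounded_set X EE (\<alpha> C)"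
    and \<alpha>: "\<And>C. bounded_set X EE C \<Longrightarrow> \<forall>w\<in>W - \<alpha> C. \<forall>c\<in>C. {w, c} \<in> UU"
    by metis
  have "\<forall>C. \<exists>M. bounded_set X EE C \<longrightarrow> bounded_set X EE M \<and> (\<forall>b\<in>B - M. \<forall>c\<in>C. {b, c} \<in> VV)"
    using hyp2_nbhd_of_pairs[OF VV B(1) \<open>w0 \<in> X\<close>] by blast
  then obtain \<beta> where \<beta>_bounded: "\<And>C. bounded_set X EE C \<Longrightarrow> bounded_set X EE (\<beta> C)"
    and \<beta>: "\<And>C. bounded_set X EE C \<Longrightarrow> \<forall>b\<in>B - \<beta> C. \<forall>c\<in>C. {b, c} \<in> VV"
    by metis
  have dichotomy: "D \<subseteq> \<alpha> C \<or> C \<subseteq> \<beta> D"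
    if "C \<subseteq> B" "D \<subseteq> W" "bounded_set X EE C" "bounded_set X EE D" for C D
  proof (rule ccontr)
    assume "\<not> (D \<subseteq> \<alpha> C \<or> C \<subseteq> \<beta> D)"
    then obtain w b where "w \<in> D - \<alpha> C" "b \<in> C - \<beta> D" by blast
    then have "{w, b} \<in> UU" "{b, w} \<in> VV" using that \<alpha> \<beta> by blast+
    then show False using disjoint by (auto simp: insert_commute)
  qed
  show ?thesis
    by (intro exI[of _ \<alpha>] exI[of _ \<beta>] conjI allI impI)
      (simp_all add: \<alpha>_bounded \<beta>_bounded dichotomy)
qed

lemma linear_bornology_base_of_asymp_disjoint:
  assumes normal: "normal_ballean (hyp2_carrier X EE) (hyp2_entourages X EE)"
    and G: "sym G" "growth_bound X EE G"
    and A: "A \<subseteq> X" "\<not> bounded_set X EE A" and B: "B \<subseteq> X" "\<not> bounded_set X EE B"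
    and AB: "asymp_disjoint X EE A B"
  shows "has_linear_bornology_base X EE"
proof -
  define G' where "G' = G - (A \<times> B \<union> B \<times> A)"
  define W where "W = X - G' `` B"
  have G': "growth_bound X EE G'" unfolding G'_def using G(2) AB by (rule growth_bound_Diff_asymp_disjoint)
  have "sym G'" using G(1) unfolding G'_def sym_def by blast
  have "A \<subseteq> W" using A(1) unfolding W_def G'_def by blast
  then have W: "W \<subseteq> X" "\<not> bounded_set X EE W" using A(2) bounded_set_subset unfolding W_def by blast+
  have WB: "asymp_disjoint X EE W B" unfolding W_def using G' by (rule asymp_disjoint_outside_Image)
  obtain \<alpha> \<beta> where \<alpha>\<beta>: "\<And>C. bounded_set X EE C \<Longrightarrow> bounded_set X EE (\<alpha> C) \<and> bounded_set X EE (\<beta> C)"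
    and dichotomy: "\<And>C D. C \<subseteq> B \<Longrightarrow> D \<subseteq> W \<Longrightarrow> bounded_set X EE C \<Longrightarrow> bounded_set X EE D \<Longrightarrow>
       D \<subseteq> \<alpha> C \<or> C \<subseteq> \<beta> D"
    using exists_dichotomy_maps[OF normal W B WB] by metis
  interpret dichotomous_bornology "bounded_set X EE" G' W B \<alpha> \<beta>
  proof
    show "bounded_set X EE T" if "T \<subseteq> S" "bounded_set X EE S" for S T
      using that by (rule bounded_set_subset)
    show "bounded_set X EE (S \<union> T)" if "bounded_set X EE S" "bounded_set X EE T" for S T
      using that by (rule bounded_Un)
    show "bounded_set X EE {x}" if "x \<in> W \<union> B" for x
      using that W(1) B(1) bounded_singleton by blast
    show "bounded_set X EE (G' `` S)" if "bounded_set X EE S" for S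
      using G' that unfolding growth_bound_def by blast
    show "S \<subseteq> S \<inter> W \<union> G' `` (G' `` S \<inter> B)" if "bounded_set X EE S" for S
      using bounded_subset_carrier[OF that] \<open>sym G'\<close> unfolding W_def sym_def by blast
    show "bounded_set X EE (\<alpha> C)" "bounded_set X EE (\<beta> C)" if "bounded_set X EE C" for C
      using \<alpha>\<beta>[OF that] by blast+
    show "D \<subseteq> \<alpha> C \<or> C \<subseteq> \<beta> D"
      if "bounded_set X EE C" "C \<subseteq> B" "bounded_set X EE D" "D \<subseteq> W" for C D
      using dichotomy that by blast
  qed (fact W(2) B(2))+
  show ?thesis unfolding has_linear_bornology_base_def
    using linear_base_if_small_unions_bounded[OF bd_Un small_union_bounded] by blast
qed

end

theorem theorem1p11:
  fixes X :: "'a set" and EE :: "('a \<times> 'a) set set"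
  assumes "ballean X EE" and "X \<noteq> {}"
    and "normal_ballean (hyp2_carrier X EE) (hyp2_entourages X EE)"
  shows "bounded_growth X EE \<and> (ultranormal X EE \<or> has_linear_bornology_base X EE)"
proof -
  interpret nonempty_ballean X EE using assms(1,2) by unfold_locales
  obtain G where G: "sym G" "growth_bound X EE G"
    using exists_symmetric_growth_bound[OF assms(3)] by blast
  have "ultranormal X EE \<or> has_linear_bornology_base X EE"
    using linear_bornology_base_of_asymp_disjoint[OF assms(3) G] unfolding ultranormal_def by blast
  then show ?thesis using G(2) bounded_growth_iff by blast
qed

end
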